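(* Let $\mathcal F,\mathcal G\subset 2^{[n]}$ be cross-intersecting families, i.e. $A\cap B\neq\emptyset$ for all $A\in\mathcal F$, $B\in\mathcal G$. Then $$|\mathcal F|+|\mathcal G|\le \max\{|\mathcal F^{\downarrow}|,|\mathcal G^{\downarrow}|\}.$$
   Context: $[n]=\{1,\dots,n\}$. For a family $\mathcal F$, $\mathcal F^{\downarrow}=\{G:\exists F\in\mathcal F,\ G\subset F\}$ is the down-set generated by $\mathcal F$. *)

theory Defs
  imports Main
begin

definition downset :: "'a set set \<Rightarrow> 'a set set" where
  "downset F = {G. \<exists>A\<in>F. G \<subseteq> A}"

end

theory Submission
  imports Defs
begin

text \<open>Pass to the up-set \<open>F\<^sup>\<up>\<close> of \<open>F\<close> inside \<open>2\<^bsup>[n]\<^esup>\<close>. Since \<open>F \<subseteq> F\<^sup>\<down> \<inter> F\<^sup>\<up>\<close>, Kleitman's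
  correlation inequality for a down-set and an up-set gives \<open>2\<^sup>n |F| \<le> |F\<^sup>\<down>| |F\<^sup>\<up>|\<close>, and likewise
  for \<open>G\<close>. Cross-intersection means that no set of \<open>F\<^sup>\<up>\<close> is the complement of a set of \<open>G\<^sup>\<up>\<close>, so
  \<open>|F\<^sup>\<up>| + |G\<^sup>\<up>| \<le> 2\<^sup>n\<close>. Hence
  \<open>2\<^sup>n (|F| + |G|) \<le> max (|F\<^sup>\<down>|, |G\<^sup>\<down>|) (|F\<^sup>\<up>| + |G\<^sup>\<up>|) \<le> 2\<^sup>n max (|F\<^sup>\<down>|, |G\<^sup>\<down>|)\<close>.\<close>

definition down_closed :: "'a set set \<Rightarrow> bool" where
  "down_closed D \<longleftrightarrow> (\<forall>A\<in>D. \<forall>B. B \<subseteq> A \<longrightarrow> B \<in> D)"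

definition up_closed_in :: "'a set \<Rightarrow> 'a set set \<Rightarrow> bool" where
  "up_closed_in S U \<longleftrightarrow> U \<subseteq> Pow S \<and> (\<forall>A\<in>U. \<forall>B. A \<subseteq> B \<and> B \<subseteq> S \<longrightarrow> B \<in> U)"

definition upset :: "'a set \<Rightarrow> 'a set set \<Rightarrow> 'a set set" where
  "upset S F = {X. X \<subseteq> S \<and> (\<exists>A\<in>F. A \<subseteq> X)}"

definition deletion :: "'a \<Rightarrow> 'a set set \<Rightarrow> 'a set set" where
  "deletion x H = {A\<in>H. x \<notin> A}"

definition link :: "'a \<Rightarrow> 'a set set \<Rightarrow> 'a set set" where
  "link x H = {A. x \<notin> A \<and> insert x A \<in> H}"

lemma card_deletion_add_card_link:
  assumes "finite H"
  shows "card H = card (deletion x H) + card (link x H)"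
proof -
  have "deletion x H \<union> {A\<in>H. x \<in> A} = H"
    by (auto simp: deletion_def)
  moreover have "card (deletion x H \<union> {A\<in>H. x \<in> A}) = card (deletion x H) + card {A\<in>H. x \<in> A}"
    using assms by (intro card_Un_disjoint) (auto simp: deletion_def)
  ultimately have "card H = card (deletion x H) + card {A\<in>H. x \<in> A}"
    by simp
  also have "{A\<in>H. x \<in> A} = insert x ` link x H"
  proof (intro equalityI subsetI)
    fix A
    assume "A \<in> {A\<in>H. x \<in> A}"
    then have "A - {x} \<in> link x H" and "A = insert x (A - {x})"
      by (auto simp: link_def insert_absorb)
    then show "A \<in> insert x ` link x H"
      by blast
  qed (auto simp: link_def)
  also have "card (insert x ` link x H) = card (link x H)"
    by (rule card_image) (auto simp: inj_on_def link_def dest: insert_ident)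
  finally show ?thesis .
qed

lemma deletion_Int: "deletion x (D \<inter> U) = deletion x D \<inter> deletion x U"
  by (auto simp: deletion_def)

lemma link_Int: "link x (D \<inter> U) = link x D \<inter> link x U"
  by (auto simp: link_def)

lemma deletion_subset_Pow: "H \<subseteq> Pow (insert x S) \<Longrightarrow> deletion x H \<subseteq> Pow S"
  by (auto simp: deletion_def)

lemma link_subset_Pow: "H \<subseteq> Pow (insert x S) \<Longrightarrow> link x H \<subseteq> Pow S"
  by (auto simp: link_def)

lemma down_closed_deletion: "down_closed D \<Longrightarrow> down_closed (deletion x D)"
  by (auto simp: down_closed_def deletion_def)

lemma down_closed_link: "down_closed D \<Longrightarrow> down_closed (link x D)"
  unfolding down_closed_def link_def by (blast intro: insert_mono)

lemma link_subset_deletion: "down_closed D \<Longrightarrow> link x D \<subseteq> deletion x D"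
  by (auto simp: down_closed_def link_def deletion_def)

lemma up_closed_in_deletion:
  "up_closed_in (insert x S) U \<Longrightarrow> x \<notin> S \<Longrightarrow> up_closed_in S (deletion x U)"
  unfolding up_closed_in_def deletion_def by (blast intro: subset_insertI2)

lemma up_closed_in_link:
  assumes "up_closed_in (insert x S) U" and "x \<notin> S"
  shows "up_closed_in S (link x U)"
  unfolding up_closed_in_def
proof (intro conjI ballI allI impI)
  show "link x U \<subseteq> Pow S"
    using assms(1) unfolding up_closed_in_def link_def by blast
next
  fix A B
  assume "A \<in> link x U" and "A \<subseteq> B \<and> B \<subseteq> S"
  then have "insert x A \<in> U" and "insert x A \<subseteq> insert x B" and "insert x B \<subseteq> insert x S"
    and "x \<notin> B"
    using assms(2) by (auto simp: link_def)
  then show "B \<in> link x U"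
    using assms(1) unfolding up_closed_in_def link_def by blast
qed

lemma deletion_subset_link: "up_closed_in (insert x S) U \<Longrightarrow> deletion x U \<subseteq> link x U"
  unfolding up_closed_in_def deletion_def link_def by (auto simp: subset_insertI insert_mono)

lemma Chebyshev_two_terms_nat:
  fixes d0 d1 u0 u1 :: nat
  assumes "d1 \<le> d0" and "u0 \<le> u1"
  shows "2 * (d0 * u0 + d1 * u1) \<le> (d0 + d1) * (u0 + u1)"
proof -
  obtain a b where "d0 = d1 + a" and "u1 = u0 + b"
    using assms le_Suc_ex by blast
  then show ?thesis by (simp add: algebra_simps)
qed

text \<open>Induction on \<open>S\<close>: at a new element \<open>x\<close> the link of a down-set is contained in its deletion,
  while for an up-set it is the other way round, so the two-term Chebyshev inequality closes the step.\<close>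
theorem Kleitman_correlation:
  assumes "finite S" and "D \<subseteq> Pow S" and "down_closed D" and "up_closed_in S U"
  shows "2 ^ card S * card (D \<inter> U) \<le> card D * card U"
  using assms
proof (induction S arbitrary: D U rule: finite_induct)
  case empty
  then have "D \<subseteq> {{}}" and "U \<subseteq> {{}}"
    by (auto simp: up_closed_in_def)
  then have "D \<inter> U = {} \<or> D = {{}} \<and> U = {{}}"
    by blast
  then show ?case
    by auto
next
  case (insert x S)
  let ?D0 = "deletion x D" and ?D1 = "link x D" and ?U0 = "deletion x U" and ?U1 = "link x U"
  have UPow: "U \<subseteq> Pow (insert x S)"
    using insert.prems(3) by (simp add: up_closed_in_def)
  have finite_D: "finite D" and finite_U: "finite U"
    using insert.prems(1) UPow insert.hyps(1) by (simp_all add: finite_subset)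
  have IH0: "2 ^ card S * card (?D0 \<inter> ?U0) \<le> card ?D0 * card ?U0"
    by (intro insert.IH deletion_subset_Pow down_closed_deletion up_closed_in_deletion insert.prems insert.hyps)
  have IH1: "2 ^ card S * card (?D1 \<inter> ?U1) \<le> card ?D1 * card ?U1"
    by (intro insert.IH link_subset_Pow down_closed_link up_closed_in_link insert.prems insert.hyps)
  have "card ?D1 \<le> card ?D0"
    using deletion_subset_Pow[OF insert.prems(1)] insert.hyps(1)
    by (intro card_mono link_subset_deletion insert.prems) (simp add: finite_subset)
  moreover have "card ?U0 \<le> card ?U1"
    using link_subset_Pow[OF UPow] insert.hyps(1)
    by (intro card_mono deletion_subset_link[OF insert.prems(3)]) (simp add: finite_subset)
  moreover have "card (D \<inter> U) = card (?D0 \<inter> ?U0) + card (?D1 \<inter> ?U1)"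
    using card_deletion_add_card_link[of "D \<inter> U" x] finite_D unfolding deletion_Int link_Int by blast
  ultimately have "2 ^ card (insert x S) * card (D \<inter> U)
      \<le> 2 * (card ?D0 * card ?U0 + card ?D1 * card ?U1)"
    using insert.hyps add_mono[OF IH0 IH1] by (simp add: algebra_simps)
  also have "\<dots> \<le> (card ?D0 + card ?D1) * (card ?U0 + card ?U1)"
    by (rule Chebyshev_two_terms_nat) fact+
  also have "\<dots> = card D * card U"
    using card_deletion_add_card_link[OF finite_D] card_deletion_add_card_link[OF finite_U] by simp
  finally show ?case .
qed

lemma down_closed_downset: "down_closed (downset F)"
  unfolding down_closed_def downset_def by blast

lemma downset_subset_Pow: "F \<subseteq> Pow S \<Longrightarrow> downset F \<subseteq> Pow S"
  unfolding downset_def by blast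

lemma up_closed_in_upset: "up_closed_in S (upset S F)"
  unfolding up_closed_in_def upset_def by blast

lemma subset_downset_Int_upset: "F \<subseteq> Pow S \<Longrightarrow> F \<subseteq> downset F \<inter> upset S F"
  unfolding downset_def upset_def by blast

lemma card_le_downset_upset:
  assumes "finite S" and "F \<subseteq> Pow S"
  shows "2 ^ card S * card F \<le> card (downset F) * card (upset S F)"
proof -
  have "card F \<le> card (downset F \<inter> upset S F)"
    using assms downset_subset_Pow[OF assms(2)]
    by (intro card_mono subset_downset_Int_upset) (auto intro: finite_subset)
  also have "2 ^ card S * \<dots> \<le> card (downset F) * card (upset S F)"
    using assms by (intro Kleitman_correlation downset_subset_Pow down_closed_downset up_closed_in_upset)
  finally show ?thesis
    by simp
qed

text \<open>Complementation maps \<open>upset S G\<close> injectively into the complement of \<open>upset S F\<close> in \<open>Pow S\<close>.\<close>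
lemma cross_intersecting_card_upsets:
  assumes "finite S" and "\<And>A B. A \<in> F \<Longrightarrow> B \<in> G \<Longrightarrow> A \<inter> B \<noteq> {}"
  shows "card (upset S F) + card (upset S G) \<le> 2 ^ card S"
proof -
  let ?co = "\<lambda>X. S - X"
  have "upset S F \<inter> ?co ` upset S G = {}"
    using assms(2) unfolding upset_def by blast
  moreover have "inj_on ?co (upset S G)"
    unfolding inj_on_def upset_def by blast
  moreover have "upset S F \<union> ?co ` upset S G \<subseteq> Pow S"
    unfolding upset_def by blast
  ultimately have "card (upset S F) + card (upset S G) \<le> card (Pow S)"
    using assms(1)
    by (metis card_Un_disjoint card_image card_mono finite_Pow_iff finite_Un rev_finite_subset)
  then show ?thesis
    using assms(1) by (simp add: card_Pow)
qed

theorem theorem1p6: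
  fixes n :: nat and F G :: "nat set set"
  assumes "F \<subseteq> Pow {1..n}" and "G \<subseteq> Pow {1..n}"
    and "\<And>A B. A \<in> F \<Longrightarrow> B \<in> G \<Longrightarrow> A \<inter> B \<noteq> {}"
  shows "card F + card G \<le> max (card (downset F)) (card (downset G))"
proof -
  let ?S = "{1..n}" and ?M = "max (card (downset F)) (card (downset G))"
  have "2 ^ card ?S * (card F + card G)
      \<le> card (downset F) * card (upset ?S F) + card (downset G) * card (upset ?S G)"
    using card_le_downset_upset[OF _ assms(1)] card_le_downset_upset[OF _ assms(2)]
    by (simp add: add_mono add_mult_distrib2)
  also have "\<dots> \<le> ?M * (card (upset ?S F) + card (upset ?S G))"
    by (simp add: add_mult_distrib2 add_mono)
  also have "\<dots> \<le> ?M * 2 ^ card ?S"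
    using cross_intersecting_card_upsets[OF finite_atLeastAtMost assms(3)] by (rule mult_le_mono2)
  finally show ?thesis
    by (simp add: mult.commute)
qed

end
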